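(* Let $\{F_1,F_2,F_3,\ldots,F_m\}$, $m\ge2$, be a collection of $X$-forests (all rooted or all unrooted), and let $F$ be a maximum agreement forest for it. Then there exists a maximal agreement forest $F'$ for $F_1$ and $F_2$ such that $F$ is also a maximum agreement forest for $\{F',F_3,\ldots,F_m\}$.
   Context: $X$-forests: for a finite label set $X$, an unrooted $X$-forest is a subgraph of a tree whose leaves are bijectively labeled by $X$ and whose unlabeled vertices have degree at least 3, each component containing a leaf, component label sets partitioning $X$; a rooted $X$-forest is the same with a distinguished leaf $\rho\in X$ as root of the underlying tree, each component rooted at $\rho$ or at the lowest common ancestor of its labeled leaves. Forests are taken up to forced contraction (unlabeled degree-2 non-root vertices suppressed, unlabeled vertices of degree $<2$ deleted). $\mathrm{Ord}(F)$ is the number of components. $F'$ is a subforest of $F$ if, up to forced contraction, $F'$ is isomorphic (preserving labels and roots) to $F$ with some edges deleted. An agreement forest for a collection is an $X$-forest that is a subforest of each member; a maximum agreement forest is one of minimum order. An agreement forest $F$ for $F_1,F_2$ is a maximal agreement forest if there is no agreement forest $F'$ for $F_1,F_2$ with $F$ a subforest of $F'$ and $\mathrm{Ord}(F')<\mathrm{Ord}(F)$. *)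

theory Defs
  imports Main
begin

text \<open>Edges are ordered pairs; in the rooted setting an edge (u,w) points from the
  parent u to the child w (away from the root), in the unrooted setting the
  orientation is irrelevant.  The mode rt is None (unrooted) or Some rho
  (rooted, rho the root label).\<close>

record ('v, 'x) xgraph =
  gV :: "'v set"
  gE :: "('v \<times> 'v) set"
  glab :: "'x \<Rightarrow> 'v"

definition adjrel :: "('v, 'x) xgraph \<Rightarrow> ('v \<times> 'v) set" where
  "adjrel G = {(u, w). (u, w) \<in> gE G \<or> (w, u) \<in> gE G}"

definition nbrs :: "('v, 'x) xgraph \<Rightarrow> 'v \<Rightarrow> 'v set" where
  "nbrs G v = {u. (u, v) \<in> gE G \<or> (v, u) \<in> gE G}"

definition deg :: "('v, 'x) xgraph \<Rightarrow> 'v \<Rightarrow> nat" where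
  "deg G v = card (nbrs G v)"

definition comps :: "('v, 'x) xgraph \<Rightarrow> 'v set set" where
  "comps G = {{u \<in> gV G. (v, u) \<in> (adjrel G)\<^sup>*} | v. v \<in> gV G}"

definition Ord :: "('v, 'x) xgraph \<Rightarrow> nat" where
  "Ord G = card (comps G)"

definition acyclic_graph :: "('v, 'x) xgraph \<Rightarrow> bool" where
  "acyclic_graph G \<longleftrightarrow> \<not> (\<exists>cs. 3 \<le> length cs \<and> distinct cs \<and> set cs \<subseteq> gV G \<and>
      (\<forall>i < length cs. (cs ! i, cs ! ((i + 1) mod length cs)) \<in> adjrel G))"

definition connected_graph :: "('v, 'x) xgraph \<Rightarrow> bool" where
  "connected_graph G \<longleftrightarrow> (\<forall>u \<in> gV G. \<forall>w \<in> gV G. (u, w) \<in> (adjrel G)\<^sup>*)"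

definition phylo_tree :: "'x set \<Rightarrow> 'x option \<Rightarrow> ('v, 'x) xgraph \<Rightarrow> bool" where
  "phylo_tree X rt T \<longleftrightarrow>
     finite (gV T) \<and> gE T \<subseteq> gV T \<times> gV T \<and>
     (\<forall>(u, w) \<in> gE T. u \<noteq> w \<and> (w, u) \<notin> gE T) \<and>
     connected_graph T \<and> acyclic_graph T \<and>
     inj_on (glab T) X \<and>
     glab T ` X = {v \<in> gV T. deg T v \<le> 1} \<and>
     (\<forall>v \<in> gV T - glab T ` X. 3 \<le> deg T v) \<and>
     (case rt of None \<Rightarrow> True
      | Some \<rho> \<Rightarrow> \<rho> \<in> X \<and>
          (\<forall>v \<in> gV T. card {u. (u, v) \<in> gE T} = (if v = glab T \<rho> then 0 else 1)))"

definition is_xforest :: "'x set \<Rightarrow> 'x option \<Rightarrow> ('v, 'x) xgraph \<Rightarrow> bool" where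
  "is_xforest X rt F \<longleftrightarrow>
     finite X \<and>
     (\<exists>T. phylo_tree X rt T \<and> gV F \<subseteq> gV T \<and> gE F \<subseteq> gE T \<and>
          (\<forall>x \<in> X. glab F x = glab T x)) \<and>
     gE F \<subseteq> gV F \<times> gV F \<and> glab F ` X \<subseteq> gV F \<and>
     (\<forall>C \<in> comps F. \<exists>x \<in> X. glab F x \<in> C)"

definition del_vertex :: "('v, 'x) xgraph \<Rightarrow> 'v \<Rightarrow> ('v, 'x) xgraph" where
  "del_vertex G v = G\<lparr>gV := gV G - {v}, gE := {e \<in> gE G. fst e \<noteq> v \<and> snd e \<noteq> v}\<rparr>"

definition fc_step :: "'x set \<Rightarrow> 'x option \<Rightarrow> ('v, 'x) xgraph \<Rightarrow> ('v, 'x) xgraph \<Rightarrow> bool" where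
  "fc_step X rt G H \<longleftrightarrow> (\<exists>v \<in> gV G. v \<notin> glab G ` X \<and>
     ((deg G v < 2 \<and> H = del_vertex G v) \<or>
      (\<exists>u w. u \<noteq> w \<and> nbrs G v = {u, w} \<and>
         (case rt of None \<Rightarrow> True | Some _ \<Rightarrow> (u, v) \<in> gE G \<and> (v, w) \<in> gE G) \<and>
         H = (del_vertex G v)\<lparr>gE := insert (u, w) (gE (del_vertex G v))\<rparr>)))"

definition fc_reduced :: "'x set \<Rightarrow> 'x option \<Rightarrow> ('v, 'x) xgraph \<Rightarrow> bool" where
  "fc_reduced X rt G \<longleftrightarrow> \<not> (\<exists>H. fc_step X rt G H)"

definition xiso :: "'x set \<Rightarrow> 'x option \<Rightarrow> ('v, 'x) xgraph \<Rightarrow> ('v, 'x) xgraph \<Rightarrow> bool" where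
  "xiso X rt G H \<longleftrightarrow> (\<exists>f. bij_betw f (gV G) (gV H) \<and>
     (\<forall>x \<in> X. f (glab G x) = glab H x) \<and>
     (\<forall>u \<in> gV G. \<forall>w \<in> gV G.
        (case rt of None \<Rightarrow> ((u, w) \<in> adjrel G \<longleftrightarrow> (f u, f w) \<in> adjrel H)
         | Some _ \<Rightarrow> ((u, w) \<in> gE G \<longleftrightarrow> (f u, f w) \<in> gE H))))"

definition fc_iso :: "'x set \<Rightarrow> 'x option \<Rightarrow> ('v, 'x) xgraph \<Rightarrow> ('v, 'x) xgraph \<Rightarrow> bool" where
  "fc_iso X rt G H \<longleftrightarrow> (\<exists>G' H'. (fc_step X rt)\<^sup>*\<^sup>* G G' \<and> fc_reduced X rt G' \<and>
     (fc_step X rt)\<^sup>*\<^sup>* H H' \<and> fc_reduced X rt H' \<and> xiso X rt G' H')"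

definition subforest :: "'x set \<Rightarrow> 'x option \<Rightarrow> ('v, 'x) xgraph \<Rightarrow> ('v, 'x) xgraph \<Rightarrow> bool" where
  "subforest X rt F' F \<longleftrightarrow> (\<exists>E0 \<subseteq> gE F. fc_iso X rt F' (F\<lparr>gE := gE F - E0\<rparr>))"

definition agreement_forest ::
  "'x set \<Rightarrow> 'x option \<Rightarrow> ('v, 'x) xgraph set \<Rightarrow> ('v, 'x) xgraph \<Rightarrow> bool" where
  "agreement_forest X rt Fs F \<longleftrightarrow> is_xforest X rt F \<and> (\<forall>G \<in> Fs. subforest X rt F G)"

definition maximum_agreement_forest ::
  "'x set \<Rightarrow> 'x option \<Rightarrow> ('v, 'x) xgraph set \<Rightarrow> ('v, 'x) xgraph \<Rightarrow> bool" where
  "maximum_agreement_forest X rt Fs F \<longleftrightarrow> agreement_forest X rt Fs F \<and>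
     (\<forall>G. agreement_forest X rt Fs G \<longrightarrow> Ord F \<le> Ord G)"

definition maximal_agreement_forest ::
  "'x set \<Rightarrow> 'x option \<Rightarrow> ('v, 'x) xgraph \<Rightarrow> ('v, 'x) xgraph \<Rightarrow> ('v, 'x) xgraph \<Rightarrow> bool" where
  "maximal_agreement_forest X rt F1 F2 F \<longleftrightarrow> agreement_forest X rt {F1, F2} F \<and>
     \<not> (\<exists>F'. agreement_forest X rt {F1, F2} F' \<and> subforest X rt F F' \<and> Ord F' < Ord F)"

end

theory Submission
  imports Defs
begin

(* Let F' have minimum order among the agreement forests of F1 and F2 of which F is a subforest.
   Both the maximality of F' and the maximum property of F for the new collection follow as soon
   as "subforest" is a preorder.  Reflexivity needs normal forms for forced contraction;
   transitivity needs these normal forms to be unique up to isomorphism (a Newman-style argument: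
   contraction terminates and is locally confluent up to isomorphism) and that forced contraction
   commutes with deleting edges, in both directions.  Of the tree structure only one consequence
   is used: every edge of a forest is a bridge, a property preserved by deleting vertices and
   edges and by suppressing degree-2 vertices. *)

definition symcl :: "('v \<times> 'v) set \<Rightarrow> ('v \<times> 'v) set" where
  "symcl E = E \<union> E\<inverse>"

definition all_bridges :: "('v \<times> 'v) set \<Rightarrow> bool" where
  "all_bridges E \<longleftrightarrow> (\<forall>a b. (a,b) \<in> E \<longrightarrow> (a,b) \<notin> (symcl (E - {(a,b),(b,a)}))\<^sup>*)"

lemma symcl_mono: "A \<subseteq> B \<Longrightarrow> symcl A \<subseteq> symcl B"
  by (auto simp: symcl_def)

lemma rtrancl_symcl_sym: "(a,b) \<in> (symcl E)\<^sup>* \<Longrightarrow> (b,a) \<in> (symcl E)\<^sup>*"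
  by (metis sym_conv_converse_eq rtrancl_converseI symcl_def sym_Un_converse sym_rtrancl)

lemma all_bridges_mono: "all_bridges E \<Longrightarrow> D \<subseteq> E \<Longrightarrow> all_bridges D"
  unfolding all_bridges_def
  by (meson Diff_mono rtrancl_mono subsetD subset_refl symcl_mono)

lemma all_bridges_no_detour:
  assumes bridges: "all_bridges E" and uv: "(u,v) \<in> symcl E" and vw: "(v,w) \<in> symcl E"
    and "u \<noteq> w"
  shows "(u,w) \<notin> (symcl (E - {(u,v),(v,u)}))\<^sup>*"
proof
  assume uw: "(u,w) \<in> (symcl (E - {(u,v),(v,u)}))\<^sup>*"
  have "(w,v) \<in> symcl (E - {(u,v),(v,u)})" using vw \<open>u \<noteq> w\<close> by (auto simp: symcl_def)
  with uw have uv_detour: "(u,v) \<in> (symcl (E - {(u,v),(v,u)}))\<^sup>*" by auto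
  from uv consider "(u,v) \<in> E" | "(v,u) \<in> E" by (auto simp: symcl_def)
  then show False
  proof cases
    case 1 with bridges uv_detour show False by (auto simp: all_bridges_def)
  next
    case 2
    from rtrancl_symcl_sym[OF uv_detour] have "(v,u) \<in> (symcl (E - {(v,u),(u,v)}))\<^sup>*"
      by (simp add: insert_commute)
    with 2 bridges show False by (auto simp: all_bridges_def)
  qed
qed

lemma all_bridges_suppress:
  assumes bridges: "all_bridges E" and uv: "(u,v) \<in> symcl E" and vw: "(v,w) \<in> symcl E"
    and "u \<noteq> w"
  defines "D \<equiv> {e \<in> E. fst e \<noteq> v \<and> snd e \<noteq> v}"
  shows "(u,w) \<notin> symcl D" "all_bridges (insert (u,w) D)"
proof -
  have no_detour: "(u,w) \<notin> (symcl (E - {(u,v),(v,u)}))\<^sup>*"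
    by (rule all_bridges_no_detour[OF bridges uv vw \<open>u \<noteq> w\<close>])
  have DE: "D \<subseteq> E - {(u,v),(v,u)}" by (auto simp: D_def)
  then show "(u,w) \<notin> symcl D" using no_detour symcl_mono by blast
  show "all_bridges (insert (u,w) D)"
    unfolding all_bridges_def
  proof (intro allI impI notI)
    fix a b assume ab: "(a,b) \<in> insert (u,w) D"
      and path: "(a,b) \<in> (symcl (insert (u,w) D - {(a,b),(b,a)}))\<^sup>*"
    show False
    proof (cases "(a,b) = (u,w)")
      case True
      then have "insert (u,w) D - {(a,b),(b,a)} \<subseteq> E - {(u,v),(v,u)}" using DE by auto
      from rtrancl_mono[OF symcl_mono[OF this]] path True no_detour show False by auto
    next
      case False
      with ab have "(a,b) \<in> D" by auto
      then have abE: "(a,b) \<in> E" and av: "a \<noteq> v" "b \<noteq> v" by (auto simp: D_def)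
      let ?R = "E - {(a,b),(b,a)}"
      have uvR: "(u,v) \<in> symcl ?R" and vwR: "(v,w) \<in> symcl ?R"
        using uv vw av by (auto simp: symcl_def)
      \<comment> \<open>the new edge uw is replaced by the path u, v, w\<close>
      have "symcl (insert (u,w) D - {(a,b),(b,a)}) \<subseteq> (symcl ?R)\<^sup>*"
      proof
        fix x assume "x \<in> symcl (insert (u,w) D - {(a,b),(b,a)})"
        then consider "x = (u,w)" | "x = (w,u)" | "x \<in> symcl ?R"
          by (auto simp: symcl_def D_def)
        then show "x \<in> (symcl ?R)\<^sup>*"
        proof cases
          case 1 then show ?thesis using uvR vwR by auto
        next
          case 2
          have "(w,v) \<in> symcl ?R" "(v,u) \<in> symcl ?R" using uvR vwR by (auto simp: symcl_def)
          then show ?thesis using 2 by auto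
        qed auto
      qed
      from rtrancl_subset_rtrancl[OF this] path have "(a,b) \<in> (symcl ?R)\<^sup>*" by auto
      with bridges abE show False by (auto simp: all_bridges_def)
    qed
  qed
qed

section \<open>Forced contraction\<close>

abbreviation fc_steps ::
  "'x set \<Rightarrow> 'x option \<Rightarrow> ('v,'x) xgraph \<Rightarrow> ('v,'x) xgraph \<Rightarrow> bool" where
  "fc_steps X rt \<equiv> (fc_step X rt)\<^sup>*\<^sup>*"

abbreviation remove_edges :: "('v,'x) xgraph \<Rightarrow> ('v \<times> 'v) set \<Rightarrow> ('v,'x) xgraph" where
  "remove_edges G E \<equiv> G\<lparr>gE := gE G - E\<rparr>"

definition suppress :: "('v,'x) xgraph \<Rightarrow> 'v \<Rightarrow> 'v \<Rightarrow> 'v \<Rightarrow> ('v,'x) xgraph" where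
  "suppress G v u w = (del_vertex G v)\<lparr>gE := insert (u,w) (gE (del_vertex G v))\<rparr>"

definition suppress_oriented :: "'x option \<Rightarrow> ('v,'x) xgraph \<Rightarrow> 'v \<Rightarrow> 'v \<Rightarrow> 'v \<Rightarrow> bool" where
  "suppress_oriented rt G u v w \<longleftrightarrow>
     (case rt of None \<Rightarrow> True | Some _ \<Rightarrow> (u, v) \<in> gE G \<and> (v, w) \<in> gE G)"

definition wf_xgraph :: "'x set \<Rightarrow> ('v,'x) xgraph \<Rightarrow> bool" where
  "wf_xgraph X G \<longleftrightarrow> finite (gV G) \<and> gE G \<subseteq> gV G \<times> gV G \<and> glab G ` X \<subseteq> gV G \<and>
     (\<forall>a b. (a,b) \<in> gE G \<longrightarrow> a \<noteq> b \<and> (b,a) \<notin> gE G) \<and> all_bridges (gE G)"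

lemma xgraph_eqI:
  "gV G = gV H \<Longrightarrow> gE G = gE H \<Longrightarrow> glab G = glab H \<Longrightarrow> (G::('v,'x) xgraph) = H"
  by (cases G, cases H) auto

lemma adjrel_symcl: "adjrel G = symcl (gE G)"
  by (auto simp: adjrel_def symcl_def)

lemma mem_nbrs_iff: "u \<in> nbrs G v \<longleftrightarrow> (u,v) \<in> symcl (gE G)"
  by (auto simp: nbrs_def symcl_def)

lemma nbrs_sym: "u \<in> nbrs G v \<longleftrightarrow> v \<in> nbrs G u"
  by (auto simp: nbrs_def)

lemma del_vertex_simps [simp]:
  "gV (del_vertex G v) = gV G - {v}"
  "gE (del_vertex G v) = {e \<in> gE G. fst e \<noteq> v \<and> snd e \<noteq> v}"
  "glab (del_vertex G v) = glab G"
  by (auto simp: del_vertex_def)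

lemma suppress_simps [simp]:
  "gV (suppress G v u w) = gV G - {v}"
  "gE (suppress G v u w) = insert (u,w) {e \<in> gE G. fst e \<noteq> v \<and> snd e \<noteq> v}"
  "glab (suppress G v u w) = glab G"
  by (auto simp: suppress_def)

lemma nbrs_del_vertex: "nbrs (del_vertex G v) y = (if y = v then {} else nbrs G y - {v})"
  by (auto simp: nbrs_def)

lemma nbrs_suppress:
  "nbrs (suppress G v u w) y = (if y = v then {} else nbrs G y - {v}) \<union>
     (if y = u then {w} else {}) \<union> (if y = w then {u} else {})"
  by (auto simp: nbrs_def)

lemma fc_step_iff:
  "fc_step X rt G H \<longleftrightarrow> (\<exists>v \<in> gV G. v \<notin> glab G ` X \<and>
     ((deg G v < 2 \<and> H = del_vertex G v) \<or>
      (\<exists>u w. u \<noteq> w \<and> nbrs G v = {u,w} \<and> suppress_oriented rt G u v w \<and> H = suppress G v u w)))"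
  unfolding fc_step_def suppress_def suppress_oriented_def by simp

lemma fc_stepE:
  assumes "fc_step X rt G H"
  obtains (delete) v where "v \<in> gV G" "v \<notin> glab G ` X" "deg G v < 2" "H = del_vertex G v"
  | (suppress) v u w where "v \<in> gV G" "v \<notin> glab G ` X" "u \<noteq> w" "nbrs G v = {u,w}"
      "suppress_oriented rt G u v w" "H = suppress G v u w"
  using assms unfolding fc_step_iff by blast

lemma fc_step_del_vertexI:
  "v \<in> gV G \<Longrightarrow> v \<notin> glab G ` X \<Longrightarrow> deg G v < 2 \<Longrightarrow> fc_step X rt G (del_vertex G v)"
  unfolding fc_step_iff by blast

lemma fc_step_suppressI:
  "v \<in> gV G \<Longrightarrow> v \<notin> glab G ` X \<Longrightarrow> u \<noteq> w \<Longrightarrow> nbrs G v = {u,w} \<Longrightarrow>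
   suppress_oriented rt G u v w \<Longrightarrow> fc_step X rt G (suppress G v u w)"
  unfolding fc_step_iff by blast

lemma wf_nbrs_subset: "wf_xgraph X G \<Longrightarrow> nbrs G v \<subseteq> gV G"
  by (auto simp: wf_xgraph_def nbrs_def)

lemma wf_finite_nbrs: "wf_xgraph X G \<Longrightarrow> finite (nbrs G v)"
  using wf_nbrs_subset by (metis wf_xgraph_def finite_subset)

lemma wf_nbrs_neq: "wf_xgraph X G \<Longrightarrow> u \<in> nbrs G v \<Longrightarrow> u \<noteq> v"
  by (auto simp: wf_xgraph_def nbrs_def)

lemma wf_arc_asym: "wf_xgraph X G \<Longrightarrow> (a,b) \<in> gE G \<Longrightarrow> a \<noteq> b \<and> (b,a) \<notin> gE G"
  by (simp add: wf_xgraph_def)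

lemma wf_no_triangle:
  assumes wf: "wf_xgraph X G" and "a \<in> nbrs G v1" "v2 \<in> nbrs G v1" "a \<in> nbrs G v2"
  shows False
proof -
  have "a \<noteq> v2" "v2 \<noteq> v1" using wf_nbrs_neq[OF wf] assms(3,4) by blast+
  have bridges: "all_bridges (gE G)" using wf by (simp add: wf_xgraph_def)
  have "(a,v1) \<in> symcl (gE G)" "(v1,v2) \<in> symcl (gE G)" using assms(2,3) nbrs_sym mem_nbrs_iff by fast+
  from all_bridges_no_detour[OF bridges this \<open>a \<noteq> v2\<close>]
  have "(a,v2) \<notin> (symcl (gE G - {(a,v1),(v1,a)}))\<^sup>*" .
  moreover have "(a,v2) \<in> symcl (gE G)" using assms(4) mem_nbrs_iff by fast
  then have "(a,v2) \<in> symcl (gE G - {(a,v1),(v1,a)})"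
    using \<open>a \<noteq> v2\<close> \<open>v2 \<noteq> v1\<close> by (auto simp: symcl_def)
  ultimately show False by auto
qed

lemma suppress_ends_not_arc:
  assumes "wf_xgraph X G" "nbrs G v = {u,w}" "u \<noteq> w"
  shows "(u,w) \<notin> gE G"
  using wf_no_triangle[OF assms(1), of u v w] assms(2,3) by (auto simp: nbrs_def)

lemma deg_mono: "wf_xgraph X G \<Longrightarrow> nbrs H y \<subseteq> nbrs G v \<Longrightarrow> deg H y \<le> deg G v"
  by (simp add: deg_def card_mono wf_finite_nbrs)

lemma deg_less_2_if_nbrs_subset: "nbrs G v \<subseteq> {z} \<Longrightarrow> deg G v < 2"
  unfolding deg_def using card_mono[of "{z}" "nbrs G v"] by simp

lemma deg_doubleton: "u \<noteq> w \<Longrightarrow> nbrs G v = {u,w} \<Longrightarrow> deg G v = 2"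
  by (simp add: deg_def)

lemma deg_less_2_nbrs_eq:
  assumes "wf_xgraph X G" "deg G v < 2" "y \<in> nbrs G v"
  shows "nbrs G v = {y}"
proof (rule ccontr)
  assume "nbrs G v \<noteq> {y}"
  then obtain z where "z \<in> nbrs G v" "z \<noteq> y" using assms(3) by blast
  then have "{y,z} \<subseteq> nbrs G v" "card {y,z} = 2" using assms(3) by auto
  then have "2 \<le> deg G v" unfolding deg_def using card_mono[OF wf_finite_nbrs[OF assms(1)]] by metis
  with assms(2) show False by simp
qed

lemma wf_del_vertex: "wf_xgraph X G \<Longrightarrow> v \<notin> glab G ` X \<Longrightarrow> wf_xgraph X (del_vertex G v)"
  unfolding wf_xgraph_def by (auto intro: all_bridges_mono)

lemma wf_remove_edges: "wf_xgraph X G \<Longrightarrow> wf_xgraph X (remove_edges G E)"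
  unfolding wf_xgraph_def by (auto intro: all_bridges_mono)

lemma wf_suppress:
  assumes wf: "wf_xgraph X G" and v: "v \<notin> glab G ` X" and "u \<noteq> w" and nb: "nbrs G v = {u,w}"
  shows "wf_xgraph X (suppress G v u w)"
proof -
  have uv: "(u,v) \<in> symcl (gE G)" and vw: "(v,w) \<in> symcl (gE G)"
    using nb mem_nbrs_iff nbrs_sym by fastforce+
  have "all_bridges (gE G)" using wf by (simp add: wf_xgraph_def)
  note suppressed = all_bridges_suppress[OF this uv vw \<open>u \<noteq> w\<close>]
  have new_edge: "(u,w) \<notin> symcl {e \<in> gE G. fst e \<noteq> v \<and> snd e \<noteq> v}"
    and bridges: "all_bridges (gE (suppress G v u w))"
    using suppressed by simp_all
  have "u \<in> gV G - {v}" "w \<in> gV G - {v}" using wf nb wf_nbrs_neq wf_nbrs_subset by fastforce+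
  then show ?thesis
    using wf v \<open>u \<noteq> w\<close> new_edge bridges unfolding wf_xgraph_def symcl_def by auto
qed

lemma wf_fc_step: "wf_xgraph X G \<Longrightarrow> fc_step X rt G H \<Longrightarrow> wf_xgraph X H"
  by (erule fc_stepE) (auto intro: wf_del_vertex wf_suppress)

lemma wf_fc_steps: "fc_steps X rt G H \<Longrightarrow> wf_xgraph X G \<Longrightarrow> wf_xgraph X H"
  by (induction rule: rtranclp_induct) (auto intro: wf_fc_step)

lemma fc_step_card_less: "wf_xgraph X G \<Longrightarrow> fc_step X rt G H \<Longrightarrow> card (gV H) < card (gV G)"
  by (erule fc_stepE) (simp_all add: wf_xgraph_def card_Diff1_less del: card_Diff_insert)

lemma fc_normal_form_exists: "wf_xgraph X G \<Longrightarrow> \<exists>R. fc_steps X rt G R \<and> fc_reduced X rt R"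
proof (induction "card (gV G)" arbitrary: G rule: less_induct)
  case less
  show ?case
  proof (cases "fc_reduced X rt G")
    case False
    then obtain H where step: "fc_step X rt G H" by (auto simp: fc_reduced_def)
    from less(1)[OF fc_step_card_less[OF less(2) step] wf_fc_step[OF less(2) step]]
    obtain R where "fc_steps X rt H R" "fc_reduced X rt R" by auto
    with step show ?thesis by (meson converse_rtranclp_into_rtranclp)
  qed auto
qed

lemma fc_reduced_steps_eq: "fc_steps X rt R S \<Longrightarrow> fc_reduced X rt R \<Longrightarrow> S = R"
  by (induction rule: converse_rtranclp_induct) (auto simp: fc_reduced_def)

section \<open>Subgraphs of trees\<close>

lemma rtrancl_distinct_path:
  "(x,y) \<in> r\<^sup>* \<Longrightarrow> \<exists>xs. xs \<noteq> [] \<and> hd xs = x \<and> last xs = y \<and> distinct xs \<and>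
     (\<forall>i. Suc i < length xs \<longrightarrow> (xs!i, xs!Suc i) \<in> r)"
proof (induction rule: rtrancl_induct)
  case base then show ?case by (intro exI[of _ "[x]"]) auto
next
  case (step y z)
  then obtain xs where xs: "xs \<noteq> []" "hd xs = x" "last xs = y" "distinct xs"
    "\<forall>i. Suc i < length xs \<longrightarrow> (xs!i, xs!Suc i) \<in> r" by auto
  show ?case
  proof (cases "z \<in> set xs")
    case True
    then obtain k where k: "k < length xs" "xs!k = z" by (auto simp: in_set_conv_nth)
    let ?ys = "take (Suc k) xs"
    have "last ?ys = z" using k xs(1) by (simp add: last_conv_nth)
    moreover have "hd ?ys = x" using xs(1,2) by (cases xs) auto
    ultimately show ?thesis using xs(1,4,5) by (intro exI[of _ ?ys]) auto
  next
    case False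
    have "\<forall>i. Suc i < length (xs @ [z]) \<longrightarrow> ((xs @ [z])!i, (xs @ [z])!Suc i) \<in> r"
    proof (intro allI impI)
      fix i assume i: "Suc i < length (xs @ [z])"
      show "((xs @ [z])!i, (xs @ [z])!Suc i) \<in> r"
      proof (cases "Suc i < length xs")
        case True then show ?thesis using xs(5) by (simp add: nth_append)
      next
        case False
        then have "i = length xs - 1" using i by simp
        then show ?thesis using xs(1,3) step(2) False i by (simp add: nth_append last_conv_nth)
      qed
    qed
    then show ?thesis using xs False by (intro exI[of _ "xs @ [z]"]) auto
  qed
qed

lemma path_set_subset:
  assumes "\<forall>i. Suc i < length xs \<longrightarrow> (xs!i, xs!Suc i) \<in> r" "r \<subseteq> V \<times> V"
    "xs \<noteq> []" "last xs \<in> V"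
  shows "set xs \<subseteq> V"
proof
  fix y assume "y \<in> set xs"
  then obtain i where i: "i < length xs" "xs!i = y" by (auto simp: in_set_conv_nth)
  show "y \<in> V"
  proof (cases "Suc i < length xs")
    case True
    then show ?thesis using assms(1,2) i by blast
  next
    case False
    then have "i = length xs - 1" using i(1) by simp
    then show ?thesis using i(2) assms(3,4) by (simp add: last_conv_nth)
  qed
qed

lemma acyclic_graph_path_not_closed:
  assumes "acyclic_graph T" "distinct xs" "3 \<le> length xs" "set xs \<subseteq> gV T"
    and path: "\<forall>i. Suc i < length xs \<longrightarrow> (xs!i, xs!Suc i) \<in> adjrel T"
  shows "(last xs, hd xs) \<notin> adjrel T"
proof
  assume closing: "(last xs, hd xs) \<in> adjrel T"
  have "\<forall>i < length xs. (xs ! i, xs ! ((i + 1) mod length xs)) \<in> adjrel T"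
  proof (intro allI impI)
    fix i assume i: "i < length xs"
    show "(xs ! i, xs ! ((i + 1) mod length xs)) \<in> adjrel T"
    proof (cases "Suc i < length xs")
      case False
      then have "Suc i = length xs" using i by simp
      then have "i = length xs - 1" "(i + 1) mod length xs = 0" by auto
      with closing \<open>3 \<le> length xs\<close> show ?thesis
        by (metis hd_conv_nth last_conv_nth list.size(3) not_numeral_le_zero)
    qed (use path in auto)
  qed
  with assms(1-4) show False unfolding acyclic_graph_def by blast
qed

lemma phylo_tree_all_bridges:
  assumes T: "phylo_tree X rt T"
  shows "all_bridges (gE T)"
  unfolding all_bridges_def
proof (intro allI impI notI)
  fix a b assume ab: "(a,b) \<in> gE T" and detour: "(a,b) \<in> (symcl (gE T - {(a,b),(b,a)}))\<^sup>*"
  let ?r = "symcl (gE T - {(a,b),(b,a)})"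
  have EV: "gE T \<subseteq> gV T \<times> gV T" and "a \<noteq> b" and acyclic: "acyclic_graph T"
    using T ab unfolding phylo_tree_def by auto
  obtain xs where xs: "xs \<noteq> []" "hd xs = a" "last xs = b" "distinct xs"
    and path: "\<forall>i. Suc i < length xs \<longrightarrow> (xs!i, xs!Suc i) \<in> ?r"
    using rtrancl_distinct_path[OF detour] by auto
  have "?r \<subseteq> adjrel T" by (auto simp: adjrel_symcl symcl_def)
  with path have adj_path: "\<forall>i. Suc i < length xs \<longrightarrow> (xs!i, xs!Suc i) \<in> adjrel T" by blast
  have "length xs \<noteq> 0" using xs(1) by simp
  moreover have "length xs \<noteq> 1" using xs \<open>a \<noteq> b\<close> by (cases xs) auto
  moreover have "length xs \<noteq> 2"
  proof
    assume "length xs = 2"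
    then have "xs!0 = a" "xs!1 = b" "(xs!0, xs!Suc 0) \<in> ?r"
      using xs(1,2,3) path by (auto simp: hd_conv_nth last_conv_nth)
    then show False by (auto simp: symcl_def)
  qed
  ultimately have "3 \<le> length xs" by linarith
  have "?r \<subseteq> gV T \<times> gV T" using EV by (auto simp: symcl_def)
  with path_set_subset[OF path] have "set xs \<subseteq> gV T" using xs(1,3) EV ab by auto
  moreover have "(last xs, hd xs) \<in> adjrel T" using xs ab by (auto simp: adjrel_def)
  ultimately show False
    using acyclic_graph_path_not_closed[OF acyclic xs(4) \<open>3 \<le> length xs\<close> _ adj_path] by blast
qed

lemma xforest_wf: "is_xforest X rt F \<Longrightarrow> wf_xgraph X F"
proof -
  assume "is_xforest X rt F"
  then obtain T where T: "phylo_tree X rt T" "gV F \<subseteq> gV T" "gE F \<subseteq> gE T"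
    and "gE F \<subseteq> gV F \<times> gV F" "glab F ` X \<subseteq> gV F"
    unfolding is_xforest_def by auto
  moreover have "finite (gV F)"
    using T(1,2) unfolding phylo_tree_def by (meson finite_subset)
  moreover have "\<forall>a b. (a,b) \<in> gE F \<longrightarrow> a \<noteq> b \<and> (b,a) \<notin> gE F"
    using T(1,3) unfolding phylo_tree_def by blast
  ultimately show ?thesis
    using all_bridges_mono[OF phylo_tree_all_bridges[OF T(1)] T(3)] unfolding wf_xgraph_def by blast
qed

section \<open>Isomorphisms\<close>

definition iso_edges :: "'x option \<Rightarrow> ('v,'x) xgraph \<Rightarrow> ('v \<times> 'v) set" where
  "iso_edges rt G = (case rt of None \<Rightarrow> adjrel G | Some _ \<Rightarrow> gE G)"

definition xiso_map ::
  "'x set \<Rightarrow> 'x option \<Rightarrow> ('v \<Rightarrow> 'v) \<Rightarrow> ('v,'x) xgraph \<Rightarrow> ('v,'x) xgraph \<Rightarrow> bool" where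
  "xiso_map X rt f G H \<longleftrightarrow> bij_betw f (gV G) (gV H) \<and> (\<forall>x \<in> X. f (glab G x) = glab H x) \<and>
     (\<forall>u \<in> gV G. \<forall>w \<in> gV G. (u,w) \<in> iso_edges rt G \<longleftrightarrow> (f u, f w) \<in> iso_edges rt H)"

lemma xiso_iff_xiso_map: "xiso X rt G H \<longleftrightarrow> (\<exists>f. xiso_map X rt f G H)"
  by (cases rt) (simp_all add: xiso_def xiso_map_def iso_edges_def)

lemma iso_edges_adjrel: "(a,b) \<in> iso_edges rt G \<Longrightarrow> (a,b) \<in> adjrel G"
  by (cases rt) (auto simp: iso_edges_def adjrel_def)

lemma iso_edges_del_vertex:
  "a \<noteq> v \<Longrightarrow> b \<noteq> v \<Longrightarrow> (a,b) \<in> iso_edges rt (del_vertex G v) \<longleftrightarrow> (a,b) \<in> iso_edges rt G"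
  by (cases rt) (auto simp: iso_edges_def adjrel_def)

lemma iso_edges_suppress:
  "a \<noteq> v \<Longrightarrow> b \<noteq> v \<Longrightarrow> (a,b) \<in> iso_edges rt (suppress G v u w) \<longleftrightarrow>
   (a,b) \<in> iso_edges rt G \<or>
   (case rt of None \<Rightarrow> (a,b) = (u,w) \<or> (a,b) = (w,u) | Some _ \<Rightarrow> (a,b) = (u,w))"
  by (cases rt) (auto simp: iso_edges_def adjrel_def)

lemma iso_edges_remove_edges:
  assumes "wf_xgraph X G" "E \<subseteq> gE G"
  shows "(a,b) \<in> iso_edges rt (remove_edges G E) \<longleftrightarrow>
    (a,b) \<in> iso_edges rt G \<and> (a,b) \<notin> E \<and> (b,a) \<notin> E"
  using wf_arc_asym[OF assms(1)] assms(2) by (cases rt) (auto simp: iso_edges_def adjrel_def)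

lemma xiso_map_inj: "xiso_map X rt f G H \<Longrightarrow> inj_on f (gV G)"
  by (simp add: xiso_map_def bij_betw_def)

lemma xiso_map_adjrel:
  assumes "xiso_map X rt f G H" "u \<in> gV G" "w \<in> gV G"
  shows "(u,w) \<in> adjrel G \<longleftrightarrow> (f u, f w) \<in> adjrel H"
proof (cases rt)
  case None then show ?thesis using assms by (simp add: xiso_map_def iso_edges_def)
next
  case (Some r)
  then have "(u,w) \<in> gE G \<longleftrightarrow> (f u, f w) \<in> gE H" "(w,u) \<in> gE G \<longleftrightarrow> (f w, f u) \<in> gE H"
    using assms by (auto simp: xiso_map_def iso_edges_def)
  then show ?thesis by (auto simp: adjrel_def)
qed

lemma xiso_map_nbrs:
  assumes wf: "wf_xgraph X G" "wf_xgraph X H" and f: "xiso_map X rt f G H" and v: "v \<in> gV G"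
  shows "nbrs H (f v) = f ` nbrs G v"
proof
  show "f ` nbrs G v \<subseteq> nbrs H (f v)"
  proof
    fix y assume "y \<in> f ` nbrs G v"
    then obtain u where u: "u \<in> nbrs G v" "y = f u" by auto
    then have "u \<in> gV G" using wf_nbrs_subset[OF wf(1)] by auto
    with u show "y \<in> nbrs H (f v)"
      using xiso_map_adjrel[OF f _ v] by (auto simp: mem_nbrs_iff adjrel_symcl)
  qed
next
  show "nbrs H (f v) \<subseteq> f ` nbrs G v"
  proof
    fix y assume y: "y \<in> nbrs H (f v)"
    then have "y \<in> f ` gV G" using wf_nbrs_subset[OF wf(2)] f by (auto simp: xiso_map_def bij_betw_def)
    then obtain u where u: "u \<in> gV G" "y = f u" by blast
    then have "(u,v) \<in> adjrel G" using y xiso_map_adjrel[OF f u(1) v] by (simp add: mem_nbrs_iff adjrel_symcl)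
    then show "y \<in> f ` nbrs G v" using u by (auto simp: mem_nbrs_iff adjrel_symcl)
  qed
qed

lemma xiso_map_deg:
  assumes "wf_xgraph X G" "wf_xgraph X H" "xiso_map X rt f G H" "v \<in> gV G"
  shows "deg H (f v) = deg G v"
proof -
  have "inj_on f (nbrs G v)"
    using xiso_map_inj[OF assms(3)] wf_nbrs_subset[OF assms(1)] inj_on_subset by blast
  then show ?thesis unfolding deg_def xiso_map_nbrs[OF assms] by (simp add: card_image)
qed

lemma xiso_map_label_iff:
  assumes wf: "wf_xgraph X G" and f: "xiso_map X rt f G H" and v: "v \<in> gV G"
  shows "f v \<in> glab H ` X \<longleftrightarrow> v \<in> glab G ` X"
proof
  assume "f v \<in> glab H ` X"
  then obtain x where x: "x \<in> X" "f v = f (glab G x)" using f by (auto simp: xiso_map_def)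
  moreover have "glab G x \<in> gV G" using wf x by (auto simp: wf_xgraph_def)
  ultimately show "v \<in> glab G ` X" using xiso_map_inj[OF f] v by (auto dest: inj_onD)
qed (use f in \<open>auto simp: xiso_map_def\<close>)

lemma xiso_map_suppress_oriented:
  assumes "xiso_map X rt f G H" "u \<in> gV G" "v \<in> gV G" "w \<in> gV G"
  shows "suppress_oriented rt H (f u) (f v) (f w) \<longleftrightarrow> suppress_oriented rt G u v w"
  using assms by (cases rt) (auto simp: suppress_oriented_def xiso_map_def iso_edges_def)

lemma bij_betw_Diff_singleton: "bij_betw f A B \<Longrightarrow> v \<in> A \<Longrightarrow> bij_betw f (A - {v}) (B - {f v})"
  by (metis bij_betw_DiffI bij_betw_singletonI image_empty image_insert insert_subset
      bij_betw_imp_surj_on empty_subsetI image_eqI)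

lemma xiso_map_del_vertex:
  assumes f: "xiso_map X rt f G H" and v: "v \<in> gV G"
  shows "xiso_map X rt f (del_vertex G v) (del_vertex H (f v))"
  unfolding xiso_map_def
proof (intro conjI ballI)
  show "bij_betw f (gV (del_vertex G v)) (gV (del_vertex H (f v)))"
    using bij_betw_Diff_singleton f v by (auto simp: xiso_map_def)
next
  fix a b assume "a \<in> gV (del_vertex G v)" "b \<in> gV (del_vertex G v)"
  moreover from this have "f a \<noteq> f v" "f b \<noteq> f v" using xiso_map_inj[OF f] v by (auto dest: inj_onD)
  ultimately show "(a, b) \<in> iso_edges rt (del_vertex G v) \<longleftrightarrow>
      (f a, f b) \<in> iso_edges rt (del_vertex H (f v))"
    using f by (simp add: iso_edges_del_vertex xiso_map_def)
qed (use f in \<open>simp add: xiso_map_def\<close>)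

lemma xiso_map_suppress:
  assumes f: "xiso_map X rt f G H" and v: "v \<in> gV G" and uw: "u \<in> gV G" "w \<in> gV G"
  shows "xiso_map X rt f (suppress G v u w) (suppress H (f v) (f u) (f w))"
  unfolding xiso_map_def
proof (intro conjI ballI)
  show "bij_betw f (gV (suppress G v u w)) (gV (suppress H (f v) (f u) (f w)))"
    using bij_betw_Diff_singleton f v by (auto simp: xiso_map_def)
next
  fix a b assume "a \<in> gV (suppress G v u w)" "b \<in> gV (suppress G v u w)"
  then have ab: "a \<in> gV G" "b \<in> gV G" "a \<noteq> v" "b \<noteq> v" by auto
  have inj: "inj_on f (gV G)" using xiso_map_inj[OF f] .
  then have fab: "f a \<noteq> f v" "f b \<noteq> f v" using ab v by (auto dest: inj_onD)
  have "(a = u \<longleftrightarrow> f a = f u)" "(a = w \<longleftrightarrow> f a = f w)"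
    "(b = u \<longleftrightarrow> f b = f u)" "(b = w \<longleftrightarrow> f b = f w)"
    using inj ab uw by (auto dest: inj_onD)
  moreover have "(a,b) \<in> iso_edges rt G \<longleftrightarrow> (f a, f b) \<in> iso_edges rt H"
    using f ab by (simp add: xiso_map_def)
  ultimately show "(a, b) \<in> iso_edges rt (suppress G v u w) \<longleftrightarrow>
      (f a, f b) \<in> iso_edges rt (suppress H (f v) (f u) (f w))"
    unfolding iso_edges_suppress[OF ab(3,4)] iso_edges_suppress[OF fab]
    by (cases rt) auto
qed (use f in \<open>simp add: xiso_map_def\<close>)

lemma xiso_map_remove_edges:
  assumes wfG: "wf_xgraph X G" and wfH: "wf_xgraph X H" and f: "xiso_map X rt f G H"
    and E: "E \<subseteq> gE G"
  shows "\<exists>E' \<subseteq> gE H. xiso_map X rt f (remove_edges G E) (remove_edges H E')"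
proof -
  define E' where "E' = {(x,y) \<in> gE H. \<exists>(c,d) \<in> E. (x = f c \<and> y = f d) \<or> (x = f d \<and> y = f c)}"
  have E'H: "E' \<subseteq> gE H" by (auto simp: E'_def)
  have EV: "gE G \<subseteq> gV G \<times> gV G" using wfG by (simp add: wf_xgraph_def)
  have image_E: "((f a, f b) \<in> E' \<or> (f b, f a) \<in> E') \<longleftrightarrow> ((a,b) \<in> E \<or> (b,a) \<in> E)"
    if ab: "a \<in> gV G" "b \<in> gV G" "(a,b) \<in> iso_edges rt G" for a b
  proof
    assume "(f a, f b) \<in> E' \<or> (f b, f a) \<in> E'"
    then obtain c d where cd: "(c,d) \<in> E" "(f a = f c \<and> f b = f d) \<or> (f a = f d \<and> f b = f c)"
      unfolding E'_def by auto
    have "c \<in> gV G" "d \<in> gV G" using cd(1) E EV by auto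
    then have "(a = c \<and> b = d) \<or> (a = d \<and> b = c)"
      using cd(2) ab xiso_map_inj[OF f] by (auto dest: inj_onD)
    then show "(a,b) \<in> E \<or> (b,a) \<in> E" using cd(1) by auto
  next
    assume "(a,b) \<in> E \<or> (b,a) \<in> E"
    moreover have "(f a, f b) \<in> adjrel H"
      using iso_edges_adjrel[OF ab(3)] xiso_map_adjrel[OF f ab(1,2)] by simp
    ultimately show "(f a, f b) \<in> E' \<or> (f b, f a) \<in> E'" unfolding E'_def adjrel_def by blast
  qed
  have "xiso_map X rt f (remove_edges G E) (remove_edges H E')"
    unfolding xiso_map_def
  proof (intro conjI ballI)
    fix a b assume "a \<in> gV (remove_edges G E)" "b \<in> gV (remove_edges G E)"
    then have ab: "a \<in> gV G" "b \<in> gV G" by auto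
    have "(a,b) \<in> iso_edges rt G \<longleftrightarrow> (f a, f b) \<in> iso_edges rt H"
      using f ab by (simp add: xiso_map_def)
    then show "(a, b) \<in> iso_edges rt (remove_edges G E) \<longleftrightarrow>
        (f a, f b) \<in> iso_edges rt (remove_edges H E')"
      unfolding iso_edges_remove_edges[OF wfG E] iso_edges_remove_edges[OF wfH E'H]
      using image_E[OF ab] by blast
  qed (use f in \<open>simp_all add: xiso_map_def\<close>)
  then show ?thesis using E'H by blast
qed

lemma xiso_refl: "xiso X rt G G"
  unfolding xiso_iff_xiso_map xiso_map_def by (intro exI[of _ id]) auto

lemma xiso_map_inv:
  assumes wf: "wf_xgraph X G" and f: "xiso_map X rt f G H"
  shows "xiso_map X rt (inv_into (gV G) f) H G"
  unfolding xiso_map_def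
proof (intro conjI ballI)
  let ?g = "inv_into (gV G) f"
  have bij: "bij_betw f (gV G) (gV H)" using f by (simp add: xiso_map_def)
  then show bij_g: "bij_betw ?g (gV H) (gV G)" by (rule bij_betw_inv_into)
  show "?g (glab H x) = glab G x" if "x \<in> X" for x
  proof -
    have "glab G x \<in> gV G" using wf that by (auto simp: wf_xgraph_def)
    moreover have "glab H x = f (glab G x)" using f that by (simp add: xiso_map_def)
    ultimately show ?thesis using bij by (simp add: bij_betw_def)
  qed
  fix a b assume ab: "a \<in> gV H" "b \<in> gV H"
  then have "?g a \<in> gV G" "?g b \<in> gV G" "f (?g a) = a" "f (?g b) = b"
    using bij bij_g by (auto simp: bij_betw_def intro: f_inv_into_f)
  moreover have "(?g a, ?g b) \<in> iso_edges rt G \<longleftrightarrow> (f (?g a), f (?g b)) \<in> iso_edges rt H"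
    using f calculation(1,2) by (simp add: xiso_map_def)
  ultimately show "(a, b) \<in> iso_edges rt H \<longleftrightarrow> (?g a, ?g b) \<in> iso_edges rt G" by simp
qed

lemma xiso_sym: "wf_xgraph X G \<Longrightarrow> xiso X rt G H \<Longrightarrow> xiso X rt H G"
  using xiso_map_inv xiso_iff_xiso_map by metis

lemma xiso_trans: "xiso X rt G H \<Longrightarrow> xiso X rt H K \<Longrightarrow> xiso X rt G K"
proof -
  assume "xiso X rt G H" "xiso X rt H K"
  then obtain f g where f: "xiso_map X rt f G H" and g: "xiso_map X rt g H K"
    by (auto simp: xiso_iff_xiso_map)
  have "xiso_map X rt (g \<circ> f) G K" unfolding xiso_map_def
  proof (intro conjI ballI)
    show "bij_betw (g \<circ> f) (gV G) (gV K)" using f g bij_betw_trans by (auto simp: xiso_map_def)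
  next
    fix a b assume "a \<in> gV G" "b \<in> gV G"
    moreover from this have "f a \<in> gV H" "f b \<in> gV H" using f by (auto simp: xiso_map_def bij_betw_def)
    ultimately show "(a, b) \<in> iso_edges rt G \<longleftrightarrow> ((g \<circ> f) a, (g \<circ> f) b) \<in> iso_edges rt K"
      using f g by (simp add: xiso_map_def)
  qed (use f g in \<open>simp add: xiso_map_def\<close>)
  then show ?thesis by (auto simp: xiso_iff_xiso_map)
qed

lemma xiso_map_fc_step:
  assumes wf: "wf_xgraph X G" "wf_xgraph X H" and f: "xiso_map X rt f G H"
    and step: "fc_step X rt G G'"
  shows "\<exists>H'. fc_step X rt H H' \<and> xiso_map X rt f G' H'"
  using step
proof (cases rule: fc_stepE)
  case (delete v)
  have "f v \<in> gV H" "f v \<notin> glab H ` X"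
    using delete f xiso_map_label_iff[OF wf(1) f] by (auto simp: xiso_map_def bij_betw_def)
  then have "fc_step X rt H (del_vertex H (f v))"
    using delete xiso_map_deg[OF wf f] by (auto intro: fc_step_del_vertexI)
  then show ?thesis using xiso_map_del_vertex[OF f] delete by auto
next
  case (suppress v u w)
  have fv: "f v \<in> gV H" "f v \<notin> glab H ` X"
    using suppress f xiso_map_label_iff[OF wf(1) f] by (auto simp: xiso_map_def bij_betw_def)
  have uw: "u \<in> gV G" "w \<in> gV G" using wf_nbrs_subset[OF wf(1)] suppress by auto
  then have "f u \<noteq> f w" using suppress xiso_map_inj[OF f] by (auto dest: inj_onD)
  moreover have "nbrs H (f v) = {f u, f w}" using xiso_map_nbrs[OF wf f] suppress by simp
  moreover have "suppress_oriented rt H (f u) (f v) (f w)"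
    using xiso_map_suppress_oriented[OF f uw(1) _ uw(2)] suppress by simp
  ultimately have "fc_step X rt H (suppress H (f v) (f u) (f w))"
    using fv by (intro fc_step_suppressI)
  then show ?thesis using xiso_map_suppress[OF f _ uw] suppress by auto
qed

lemma xiso_map_fc_steps:
  assumes "fc_steps X rt G G'" "wf_xgraph X G" "wf_xgraph X H" "xiso_map X rt f G H"
  shows "\<exists>H'. fc_steps X rt H H' \<and> xiso_map X rt f G' H'"
  using assms
proof (induction rule: rtranclp_induct)
  case (step y z)
  then obtain H' where H': "fc_steps X rt H H'" "xiso_map X rt f y H'" by auto
  moreover have "wf_xgraph X y" "wf_xgraph X H'" using wf_fc_steps step H'(1) by blast+
  ultimately obtain H'' where "fc_step X rt H' H''" "xiso_map X rt f z H''"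
    using xiso_map_fc_step step(2) by blast
  then show ?case using H'(1) by (meson rtranclp.rtrancl_into_rtrancl)
qed auto

lemma xiso_fc_normal_form:
  assumes "fc_steps X rt G G'" "fc_reduced X rt G'" "wf_xgraph X G" "wf_xgraph X H" "xiso X rt G H"
  shows "\<exists>H'. fc_steps X rt H H' \<and> fc_reduced X rt H' \<and> xiso X rt G' H'"
proof -
  obtain f where f: "xiso_map X rt f G H" using assms(5) by (auto simp: xiso_iff_xiso_map)
  obtain H' where H': "fc_steps X rt H H'" "xiso_map X rt f G' H'"
    using xiso_map_fc_steps[OF assms(1,3,4) f] by auto
  have wf: "wf_xgraph X G'" "wf_xgraph X H'" using wf_fc_steps H'(1) assms by blast+
  have "fc_reduced X rt H'"
    using xiso_map_fc_step[OF wf(2,1) xiso_map_inv[OF wf(1) H'(2)]] assms(2)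
    by (auto simp: fc_reduced_def)
  then show ?thesis using H' xiso_iff_xiso_map by blast
qed

section \<open>Confluence of forced contraction\<close>

lemma fc_step_diamond_del_del:
  assumes wf: "wf_xgraph X G"
    and v: "v1 \<in> gV G" "v1 \<notin> glab G ` X" "v2 \<in> gV G" "v2 \<notin> glab G ` X" "v1 \<noteq> v2"
    and deg: "deg G v1 < 2" "deg G v2 < 2"
  shows "\<exists>K. fc_step X rt (del_vertex G v1) K \<and> fc_step X rt (del_vertex G v2) K"
proof -
  have "deg (del_vertex G v1) v2 \<le> deg G v2" "deg (del_vertex G v2) v1 \<le> deg G v1"
    by (auto intro!: deg_mono[OF wf] simp: nbrs_del_vertex split: if_splits)
  then have "fc_step X rt (del_vertex G v1) (del_vertex (del_vertex G v1) v2)"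
    "fc_step X rt (del_vertex G v2) (del_vertex (del_vertex G v2) v1)"
    using v deg by (auto intro!: fc_step_del_vertexI)
  moreover have "del_vertex (del_vertex G v2) v1 = del_vertex (del_vertex G v1) v2"
    by (rule xgraph_eqI) auto
  ultimately show ?thesis by metis
qed

lemma fc_step_diamond_del_suppress:
  assumes wf: "wf_xgraph X G"
    and v: "v1 \<in> gV G" "v1 \<notin> glab G ` X" "v2 \<in> gV G" "v2 \<notin> glab G ` X" "v1 \<noteq> v2"
    and deg: "deg G v1 < 2"
    and uw: "u \<noteq> w" "nbrs G v2 = {u,w}" "suppress_oriented rt G u v2 w"
  shows "\<exists>K. fc_step X rt (del_vertex G v1) K \<and> fc_step X rt (suppress G v2 u w) K"
proof (cases "v1 \<in> {u,w}")
  case False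
  have "nbrs (del_vertex G v1) v2 = {u,w}" using uw False v(5) by (auto simp: nbrs_del_vertex)
  moreover have "suppress_oriented rt (del_vertex G v1) u v2 w"
    using uw(3) False v(5) by (cases rt) (auto simp: suppress_oriented_def)
  ultimately have "fc_step X rt (del_vertex G v1) (suppress (del_vertex G v1) v2 u w)"
    using v uw(1) by (intro fc_step_suppressI) auto
  moreover have "deg (suppress G v2 u w) v1 \<le> deg G v1"
    using False v(5) by (intro deg_mono[OF wf]) (auto simp: nbrs_suppress)
  then have "fc_step X rt (suppress G v2 u w) (del_vertex (suppress G v2 u w) v1)"
    using v deg by (intro fc_step_del_vertexI) auto
  moreover have "del_vertex (suppress G v2 u w) v1 = suppress (del_vertex G v1) v2 u w"
    by (rule xgraph_eqI) (use False in auto)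
  ultimately show ?thesis by metis
next
  \<comment> \<open>v1 is a leaf hanging off v2, so both sides reduce to deleting v1 and v2\<close>
  case True
  then obtain z where z: "nbrs G v2 = {v1, z}" "z \<noteq> v1" using uw by auto
  then have "v2 \<in> nbrs G v1" using nbrs_sym by fast
  then have "nbrs G v1 = {v2}" using deg_less_2_nbrs_eq[OF wf deg] by auto
  have "nbrs (del_vertex G v1) v2 = {z}" using z v(5) by (auto simp: nbrs_del_vertex)
  then have "fc_step X rt (del_vertex G v1) (del_vertex (del_vertex G v1) v2)"
    using v by (intro fc_step_del_vertexI) (auto intro: deg_less_2_if_nbrs_subset)
  moreover have "nbrs (suppress G v2 u w) v1 = {z}"
    using \<open>nbrs G v1 = {v2}\<close> z True uw v(5) by (auto simp: nbrs_suppress)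
  then have "fc_step X rt (suppress G v2 u w) (del_vertex (suppress G v2 u w) v1)"
    using v by (intro fc_step_del_vertexI) (auto intro: deg_less_2_if_nbrs_subset)
  moreover have "del_vertex (suppress G v2 u w) v1 = del_vertex (del_vertex G v1) v2"
    by (rule xgraph_eqI) (use True in auto)
  ultimately show ?thesis by metis
qed

lemma fc_step_suppress_far:
  assumes v: "v2 \<in> gV G" "v2 \<notin> glab G ` X" "v1 \<noteq> v2"
    and uw2: "u2 \<noteq> w2" "nbrs G v2 = {u2,w2}" "suppress_oriented rt G u2 v2 w2"
    and far: "v1 \<notin> {u2,w2}" "v2 \<notin> {u1,w1}"
  shows "fc_step X rt (suppress G v1 u1 w1) (suppress (suppress G v1 u1 w1) v2 u2 w2)"
proof -
  have "nbrs (suppress G v1 u1 w1) v2 = {u2,w2}" using uw2 far v(3) by (auto simp: nbrs_suppress)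
  moreover have "suppress_oriented rt (suppress G v1 u1 w1) u2 v2 w2"
    using uw2(3) far v(3) by (cases rt) (auto simp: suppress_oriented_def)
  ultimately show ?thesis using v uw2(1) by (intro fc_step_suppressI) auto
qed

lemma fc_step_diamond_suppress_far:
  assumes v: "v1 \<in> gV G" "v1 \<notin> glab G ` X" "v2 \<in> gV G" "v2 \<notin> glab G ` X" "v1 \<noteq> v2"
    and uw1: "u1 \<noteq> w1" "nbrs G v1 = {u1,w1}" "suppress_oriented rt G u1 v1 w1"
    and uw2: "u2 \<noteq> w2" "nbrs G v2 = {u2,w2}" "suppress_oriented rt G u2 v2 w2"
    and far: "v2 \<notin> {u1,w1}"
  shows "\<exists>K. fc_step X rt (suppress G v1 u1 w1) K \<and> fc_step X rt (suppress G v2 u2 w2) K"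
proof -
  have far': "v1 \<notin> {u2,w2}" using far uw1(2) uw2(2) nbrs_sym by fast
  have "suppress (suppress G v2 u2 w2) v1 u1 w1 = suppress (suppress G v1 u1 w1) v2 u2 w2"
    by (rule xgraph_eqI) (use far far' in auto)
  then show ?thesis
    using fc_step_suppress_far[OF v(3,4,5) uw2 far' far]
      fc_step_suppress_far[OF v(1,2) v(5)[symmetric] uw1 far far'] by metis
qed

lemma fc_step_diamond_suppress_adjacent:
  assumes wf: "wf_xgraph X G"
    and v: "v1 \<in> gV G" "v1 \<notin> glab G ` X" "v2 \<in> gV G" "v2 \<notin> glab G ` X" "v1 \<noteq> v2"
    and n1: "nbrs G v1 = {a, v2}" "a \<noteq> v2" and n2: "nbrs G v2 = {v1, b}" "b \<noteq> v1"
    and uw1: "{u1,w1} = {a,v2}" and uw2: "{u2,w2} = {v1,b}"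
    and oriented: "suppress_oriented rt (suppress G v1 u1 w1) a v2 b"
      "suppress_oriented rt (suppress G v2 u2 w2) a v1 b"
  shows "\<exists>K. fc_step X rt (suppress G v1 u1 w1) K \<and> fc_step X rt (suppress G v2 u2 w2) K"
proof -
  have "a \<noteq> b" using wf_no_triangle[OF wf, of a v1 v2] n1 n2 nbrs_sym by fast
  moreover have "a \<noteq> v1" "b \<noteq> v2" using n1 n2 wf_nbrs_neq[OF wf] by auto
  ultimately have "nbrs (suppress G v1 u1 w1) v2 = {a,b}" "nbrs (suppress G v2 u2 w2) v1 = {a,b}"
    using n1 n2 v(5) uw1 uw2 by (auto simp: nbrs_suppress doubleton_eq_iff)
  then have "fc_step X rt (suppress G v1 u1 w1) (suppress (suppress G v1 u1 w1) v2 a b)"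
    "fc_step X rt (suppress G v2 u2 w2) (suppress (suppress G v2 u2 w2) v1 a b)"
    using v oriented \<open>a \<noteq> b\<close> by (auto intro!: fc_step_suppressI)
  moreover have "v2 = u1 \<or> v2 = w1" "v1 = u2 \<or> v1 = w2" using uw1 uw2 by auto
  then have "suppress (suppress G v2 u2 w2) v1 a b = suppress (suppress G v1 u1 w1) v2 a b"
    by (intro xgraph_eqI) auto
  ultimately show ?thesis by metis
qed

lemma fc_step_diamond_suppress_suppress:
  assumes wf: "wf_xgraph X G"
    and v: "v1 \<in> gV G" "v1 \<notin> glab G ` X" "v2 \<in> gV G" "v2 \<notin> glab G ` X" "v1 \<noteq> v2"
    and uw1: "u1 \<noteq> w1" "nbrs G v1 = {u1,w1}" "suppress_oriented rt G u1 v1 w1"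
    and uw2: "u2 \<noteq> w2" "nbrs G v2 = {u2,w2}" "suppress_oriented rt G u2 v2 w2"
  shows "\<exists>K. fc_step X rt (suppress G v1 u1 w1) K \<and> fc_step X rt (suppress G v2 u2 w2) K"
proof (cases "v2 \<in> {u1,w1}")
  case False then show ?thesis using fc_step_diamond_suppress_far[OF v uw1 uw2] by blast
next
  case True
  then have v1_nbr: "v1 \<in> {u2,w2}" using uw1(2) uw2(2) nbrs_sym by fast
  define a where "a = (if u1 = v2 then w1 else u1)"
  define b where "b = (if u2 = v1 then w2 else u2)"
  have n1: "nbrs G v1 = {a, v2}" "a \<noteq> v2" "{u1,w1} = {a,v2}" using True uw1 by (auto simp: a_def)
  have n2: "nbrs G v2 = {v1, b}" "b \<noteq> v1" "{u2,w2} = {v1,b}" using v1_nbr uw2 by (auto simp: b_def)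
  note adjacent = fc_step_diamond_suppress_adjacent[OF wf v n1(1,2) n2(1,2) n1(3) n2(3)]
  show ?thesis
  proof (cases rt)
    case None then show ?thesis using adjacent by (simp add: suppress_oriented_def)
  next
    case (Some r)
    have e1: "(u1,v1) \<in> gE G" "(v1,w1) \<in> gE G" and e2: "(u2,v2) \<in> gE G" "(v2,w2) \<in> gE G"
      using uw1(3) uw2(3) Some by (auto simp: suppress_oriented_def)
    note asym = wf_arc_asym[OF wf]
    show ?thesis
    proof (cases "v2 = w1")
      \<comment> \<open>the oriented path is u1, v1, v2, w2\<close>
      case True
      then have "u2 = v1" using v1_nbr e1(2) e2(2) asym by auto
      then have "a = u1" "b = w2" "u1 \<noteq> v2" "w2 \<noteq> v1" using True uw1(1) uw2(1) by (auto simp: a_def b_def)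
      then show ?thesis
        using adjacent Some True \<open>u2 = v1\<close> e1 e2 v(5) by (auto simp: suppress_oriented_def)
    next
      \<comment> \<open>the oriented path is u2, v2, v1, w1\<close>
      case False
      then have "v2 = u1" using True by auto
      then have "w2 = v1" using v1_nbr e1(1) e2(1) asym by auto
      then have ab: "a = w1" "b = u2" "w1 \<noteq> v2" "u2 \<noteq> v1"
        using \<open>v2 = u1\<close> uw1(1) uw2(1) by (auto simp: a_def b_def)
      have m2: "nbrs G v2 = {b, v1}" "{u2,w2} = {b,v1}" and m1: "nbrs G v1 = {v2, a}" "{u1,w1} = {v2,a}"
        using n1 n2 by auto
      have "suppress_oriented rt (suppress G v2 u2 w2) b v1 a"
        "suppress_oriented rt (suppress G v1 u1 w1) b v2 a"
        using Some \<open>v2 = u1\<close> \<open>w2 = v1\<close> ab e1 e2 v(5) by (auto simp: suppress_oriented_def)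
      then show ?thesis
        using fc_step_diamond_suppress_adjacent[OF wf v(3,4,1,2) v(5)[symmetric] m2(1) n2(2) m1(1)
            n1(2) m2(2) m1(2)] by blast
    qed
  qed
qed

lemma xiso_suppress_swap: "xiso X None (suppress G v u w) (suppress G v w u)"
proof -
  have "xiso_map X None id (suppress G v u w) (suppress G v w u)"
    unfolding xiso_map_def iso_edges_def adjrel_def by auto
  then show ?thesis using xiso_iff_xiso_map by blast
qed

lemma fc_step_same_vertex_xiso:
  assumes wf: "wf_xgraph X G" and s1: "fc_step X rt G H1" and s2: "fc_step X rt G H2"
    and same: "gV H1 = gV H2"
  shows "xiso X rt H1 H2"
proof -
  have removed: "gV H = gV G - {v}" if "v \<in> gV G" "H = del_vertex G v \<or> H = suppress G v u w"
    for H v u w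
    using that by auto
  show ?thesis
    using s1
  proof (cases rule: fc_stepE)
    case del1: (delete v1)
    from s2 show ?thesis
    proof (cases rule: fc_stepE)
      case del2: (delete v2)
      then have "v1 = v2" using del1 same removed by blast
      then show ?thesis using del1(4) del2(4) xiso_refl by simp
    next
      case sup2: (suppress v2 u w)
      then have "v1 = v2" using del1 same removed by blast
      then show ?thesis using del1(3) sup2(3,4) deg_doubleton by fastforce
    qed
  next
    case sup1: (suppress v1 u1 w1)
    from s2 show ?thesis
    proof (cases rule: fc_stepE)
      case del2: (delete v2)
      then have "v1 = v2" using sup1 same removed by blast
      then show ?thesis using del2(3) sup1(3,4) deg_doubleton by fastforce
    next
      case sup2: (suppress v2 u2 w2)
      then have "v1 = v2" using sup1 same removed by blast
      then have ends: "(u1 = u2 \<and> w1 = w2) \<or> (u1 = w2 \<and> w1 = u2)"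
        using sup1(4) sup2(4) by (auto simp: doubleton_eq_iff)
      show ?thesis
      proof (cases "u1 = u2 \<and> w1 = w2")
        case True
        then show ?thesis using sup1(6) sup2(6) \<open>v1 = v2\<close> xiso_refl by simp
      next
        case False
        then have swapped: "u2 = w1" "w2 = u1" using ends by auto
        \<comment> \<open>in the rooted case the orientation of the path through v rules this out\<close>
        have "rt = None"
          using sup1(5) sup2(5) swapped \<open>v1 = v2\<close> wf_arc_asym[OF wf]
          by (cases rt) (auto simp: suppress_oriented_def)
        then show ?thesis using sup1(6) sup2(6) \<open>v1 = v2\<close> swapped xiso_suppress_swap by simp
      qed
    qed
  qed
qed

lemma fc_step_diamond:
  assumes wf: "wf_xgraph X G" and s1: "fc_step X rt G H1" and s2: "fc_step X rt G H2"
    and different: "gV H1 \<noteq> gV H2"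
  shows "\<exists>K. fc_step X rt H1 K \<and> fc_step X rt H2 K"
  using s1
proof (cases rule: fc_stepE)
  case del1: (delete v1)
  from s2 show ?thesis
  proof (cases rule: fc_stepE)
    case del2: (delete v2)
    then have "v1 \<noteq> v2" using del1 different by auto
    then show ?thesis
      unfolding del1(4) del2(4)
      using fc_step_diamond_del_del[OF wf del1(1,2) del2(1,2) _ del1(3) del2(3)] by blast
  next
    case sup2: (suppress v2 u w)
    then have "v1 \<noteq> v2" using del1 different by auto
    then show ?thesis
      unfolding del1(4) sup2(6)
      using fc_step_diamond_del_suppress[OF wf del1(1,2) sup2(1,2) _ del1(3) sup2(3,4,5)] by blast
  qed
next
  case sup1: (suppress v1 u1 w1)
  from s2 show ?thesis
  proof (cases rule: fc_stepE)
    case del2: (delete v2)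
    then have "v2 \<noteq> v1" using sup1 different by auto
    then show ?thesis
      unfolding del2(4) sup1(6)
      using fc_step_diamond_del_suppress[OF wf del2(1,2) sup1(1,2) _ del2(3) sup1(3,4,5)] by blast
  next
    case sup2: (suppress v2 u2 w2)
    then have "v1 \<noteq> v2" using sup1 different by auto
    then show ?thesis
      unfolding sup1(6) sup2(6)
      using fc_step_diamond_suppress_suppress[OF wf sup1(1,2) sup2(1,2) _ sup1(3,4,5) sup2(3,4,5)]
      by blast
  qed
qed

lemma fc_step_local_confluence:
  assumes "wf_xgraph X G" "fc_step X rt G H1" "fc_step X rt G H2"
  shows "\<exists>K1 K2. fc_steps X rt H1 K1 \<and> fc_steps X rt H2 K2 \<and> xiso X rt K1 K2"
proof (cases "gV H1 = gV H2")
  case True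
  then show ?thesis using fc_step_same_vertex_xiso[OF assms] by blast
next
  case False
  then show ?thesis using fc_step_diamond[OF assms] xiso_refl by (metis r_into_rtranclp)
qed

lemma fc_normal_forms_xiso:
  assumes "wf_xgraph X G" "fc_steps X rt G R1" "fc_reduced X rt R1"
    "fc_steps X rt G R2" "fc_reduced X rt R2"
  shows "xiso X rt R1 R2"
  using assms
proof (induction "card (gV G)" arbitrary: G R1 R2 rule: less_induct)
  case less
  show ?case
  proof (cases "fc_reduced X rt G")
    case True
    then have "R1 = G" "R2 = G" using fc_reduced_steps_eq less by blast+
    then show ?thesis using xiso_refl by simp
  next
    case False
    have first_step: "\<exists>H. fc_step X rt G H \<and> fc_steps X rt H R"
      if "fc_steps X rt G R" "fc_reduced X rt R" for R
      using that False by (cases rule: converse_rtranclpE) auto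
    obtain H1 where H1: "fc_step X rt G H1" "fc_steps X rt H1 R1" using first_step less by blast
    obtain H2 where H2: "fc_step X rt G H2" "fc_steps X rt H2 R2" using first_step less by blast
    obtain K1 K2 where K: "fc_steps X rt H1 K1" "fc_steps X rt H2 K2" "xiso X rt K1 K2"
      using fc_step_local_confluence[OF less(2) H1(1) H2(1)] by blast
    have wf_H: "wf_xgraph X H1" "wf_xgraph X H2" using wf_fc_step less(2) H1 H2 by blast+
    have wf_K: "wf_xgraph X K1" "wf_xgraph X K2" using wf_fc_steps K wf_H by blast+
    obtain N1 where N1: "fc_steps X rt K1 N1" "fc_reduced X rt N1"
      using fc_normal_form_exists[OF wf_K(1)] by blast
    obtain N2 where N2: "fc_steps X rt K2 N2" "fc_reduced X rt N2" "xiso X rt N1 N2"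
      using xiso_fc_normal_form[OF N1 wf_K K(3)] by blast
    have "xiso X rt R1 N1"
      using less(1)[OF fc_step_card_less[OF less(2) H1(1)] wf_H(1) H1(2) less(4)] K(1) N1
      by (meson rtranclp_trans)
    moreover have "xiso X rt R2 N2"
      using less(1)[OF fc_step_card_less[OF less(2) H2(1)] wf_H(2) H2(2) less(6)] K(2) N2
      by (meson rtranclp_trans)
    moreover have "wf_xgraph X R2" using wf_fc_steps H2(2) wf_H(2) by blast
    ultimately show ?thesis using N2(3) xiso_sym xiso_trans by metis
  qed
qed

section \<open>Forced contraction commutes with deleting edges\<close>

lemma nbrs_remove_edges_subset: "nbrs (remove_edges G E) v \<subseteq> nbrs G v"
  by (auto simp: nbrs_def)

lemma nbrs_remove_edges_untouched:
  assumes "\<forall>e \<in> E. fst e \<noteq> v \<and> snd e \<noteq> v"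
  shows "nbrs (remove_edges G E) v = nbrs G v"
  using assms by (auto simp: nbrs_def)

lemma suppress_oriented_remove_edges_untouched:
  assumes "\<forall>e \<in> E. fst e \<noteq> v \<and> snd e \<noteq> v" "suppress_oriented rt G u v w"
  shows "suppress_oriented rt (remove_edges G E) u v w"
  using assms by (cases rt) (auto simp: suppress_oriented_def)

lemma fc_step_del_vertex_remove_edges:
  assumes wf: "wf_xgraph X B" "v \<in> gV B" "v \<notin> glab B ` X" "deg B v < 2"
  shows "fc_step X rt (remove_edges B E) (remove_edges (del_vertex B v) E)"
proof -
  have "deg (remove_edges B E) v \<le> deg B v" by (rule deg_mono[OF wf(1) nbrs_remove_edges_subset])
  then have "fc_step X rt (remove_edges B E) (del_vertex (remove_edges B E) v)"
    using assms by (intro fc_step_del_vertexI) auto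
  moreover have "del_vertex (remove_edges B E) v = remove_edges (del_vertex B v) E"
    by (rule xgraph_eqI) auto
  ultimately show ?thesis by simp
qed

lemma fc_step_suppress_remove_edges:
  assumes wf: "wf_xgraph X B" and v: "v \<in> gV B" "v \<notin> glab B ` X"
    and uw: "u \<noteq> w" "nbrs B v = {u,w}" "suppress_oriented rt B u v w" and E: "E \<subseteq> gE B"
  shows "\<exists>E' \<subseteq> gE (suppress B v u w). fc_step X rt (remove_edges B E) (remove_edges (suppress B v u w) E')"
proof (cases "\<forall>e \<in> E. fst e \<noteq> v \<and> snd e \<noteq> v")
  case True
  have "nbrs (remove_edges B E) v = {u,w}"
    using nbrs_remove_edges_untouched[OF True, of B] uw(2) by (rule trans)
  then have step: "fc_step X rt (remove_edges B E) (suppress (remove_edges B E) v u w)"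
    using v uw(1) suppress_oriented_remove_edges_untouched[OF True uw(3)]
    by (intro fc_step_suppressI) auto
  have "(u,w) \<notin> gE B" using suppress_ends_not_arc[OF wf uw(2,1)] .
  then have "suppress (remove_edges B E) v u w = remove_edges (suppress B v u w) E"
    using True E by (intro xgraph_eqI) auto
  with step have "fc_step X rt (remove_edges B E) (remove_edges (suppress B v u w) E)" by simp
  moreover have "E \<subseteq> gE (suppress B v u w)" using True E by auto
  ultimately show ?thesis by blast
next
  \<comment> \<open>an edge at v is deleted, so v is a leaf or isolated and gets deleted; the new edge uw goes too\<close>
  case False
  then obtain y where y: "(y,v) \<in> E \<or> (v,y) \<in> E" by fastforce
  have "y \<in> nbrs B v" using y E by (auto simp: nbrs_def)
  moreover have "y \<notin> nbrs (remove_edges B E) v"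
    using y E wf_arc_asym[OF wf] by (auto simp: nbrs_def)
  ultimately have "nbrs (remove_edges B E) v \<subseteq> {if y = u then w else u}"
    using nbrs_remove_edges_subset[of B E v] uw(2) by auto
  then have "deg (remove_edges B E) v < 2" by (rule deg_less_2_if_nbrs_subset)
  then have step: "fc_step X rt (remove_edges B E) (del_vertex (remove_edges B E) v)"
    using v by (intro fc_step_del_vertexI) auto
  let ?E' = "(E - {e. fst e = v \<or> snd e = v}) \<union> {(u,w)}"
  have "(u,w) \<notin> gE B" using suppress_ends_not_arc[OF wf uw(2,1)] .
  then have "del_vertex (remove_edges B E) v = remove_edges (suppress B v u w) ?E'"
    by (intro xgraph_eqI) auto
  with step have "fc_step X rt (remove_edges B E) (remove_edges (suppress B v u w) ?E')" by simp
  moreover have "?E' \<subseteq> gE (suppress B v u w)" using E by auto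
  ultimately show ?thesis by blast
qed

lemma fc_step_remove_edges:
  assumes "wf_xgraph X B" "fc_step X rt B B1" "E \<subseteq> gE B"
  shows "\<exists>E' \<subseteq> gE B1. fc_step X rt (remove_edges B E) (remove_edges B1 E')"
  using assms(2)
proof (cases rule: fc_stepE)
  case (delete v)
  then have "fc_step X rt (remove_edges B E) (remove_edges B1 E)"
    using fc_step_del_vertex_remove_edges[OF assms(1)] by blast
  moreover have "remove_edges B1 E = remove_edges B1 (E \<inter> gE B1)" by (rule xgraph_eqI) auto
  ultimately show ?thesis by (intro exI[of _ "E \<inter> gE B1"]) auto
next
  case (suppress v u w)
  then show ?thesis using fc_step_suppress_remove_edges[OF assms(1) _ _ _ _ _ assms(3)] by simp
qed

lemma fc_steps_remove_edges:
  assumes "fc_steps X rt B B'" "wf_xgraph X B" "E \<subseteq> gE B"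
  shows "\<exists>E' \<subseteq> gE B'. fc_steps X rt (remove_edges B E) (remove_edges B' E')"
  using assms(1)
proof (induction rule: rtranclp_induct)
  case (step y z)
  then obtain E1 where E1: "E1 \<subseteq> gE y" "fc_steps X rt (remove_edges B E) (remove_edges y E1)"
    by blast
  have "wf_xgraph X y" using wf_fc_steps step(1) assms(2) by blast
  then obtain E2 where "E2 \<subseteq> gE z" "fc_step X rt (remove_edges y E1) (remove_edges z E2)"
    using fc_step_remove_edges[OF _ step(2) E1(1)] by blast
  with E1(2) show ?case by (meson rtranclp.rtrancl_into_rtrancl)
qed (use assms(3) in blast)

lemma fc_step_suppress_remove_edges_back:
  assumes wf: "wf_xgraph X B" and v: "v \<in> gV B" "v \<notin> glab B ` X"
    and uw: "u \<noteq> w" "nbrs B v = {u,w}" "suppress_oriented rt B u v w"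
    and E': "E' \<subseteq> gE (suppress B v u w)"
  shows "\<exists>E \<subseteq> gE B. fc_step X rt (remove_edges B E) (remove_edges (suppress B v u w) E')"
proof (cases "(u,w) \<in> E'")
  case False
  then have untouched: "\<forall>e \<in> E'. fst e \<noteq> v \<and> snd e \<noteq> v" using E' by auto
  have "nbrs (remove_edges B E') v = {u,w}"
    using nbrs_remove_edges_untouched[OF untouched, of B] uw(2) by (rule trans)
  then have step: "fc_step X rt (remove_edges B E') (suppress (remove_edges B E') v u w)"
    using v uw(1) suppress_oriented_remove_edges_untouched[OF untouched uw(3)]
    by (intro fc_step_suppressI) auto
  have "suppress (remove_edges B E') v u w = remove_edges (suppress B v u w) E'"
    using False untouched by (intro xgraph_eqI) auto
  with step have "fc_step X rt (remove_edges B E') (remove_edges (suppress B v u w) E')" by simp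
  moreover have "E' \<subseteq> gE B" using E' False by auto
  ultimately show ?thesis by blast
next
  \<comment> \<open>deleting the new edge uw corresponds to deleting the old edge between u and v\<close>
  case True
  have "u \<in> nbrs B v" using uw(2) by simp
  then obtain eu where eu: "eu \<in> gE B" "eu = (u,v) \<or> eu = (v,u)" by (auto simp: nbrs_def)
  let ?E = "(E' - {(u,w)}) \<union> {eu}"
  have "u \<notin> nbrs (remove_edges B ?E) v" using eu wf_arc_asym[OF wf] by (auto simp: nbrs_def)
  then have "nbrs (remove_edges B ?E) v \<subseteq> {w}" using nbrs_remove_edges_subset[of B ?E v] uw(2) by auto
  then have "deg (remove_edges B ?E) v < 2" by (rule deg_less_2_if_nbrs_subset)
  then have step: "fc_step X rt (remove_edges B ?E) (del_vertex (remove_edges B ?E) v)"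
    using v by (intro fc_step_del_vertexI) auto
  have "(u,w) \<notin> gE B" using suppress_ends_not_arc[OF wf uw(2,1)] .
  then have "del_vertex (remove_edges B ?E) v = remove_edges (suppress B v u w) E'"
    using True eu by (intro xgraph_eqI) auto
  with step have "fc_step X rt (remove_edges B ?E) (remove_edges (suppress B v u w) E')" by simp
  moreover have "?E \<subseteq> gE B" using E' eu by auto
  ultimately show ?thesis by blast
qed

lemma fc_step_remove_edges_back:
  assumes "wf_xgraph X B" "fc_step X rt B B1" "E' \<subseteq> gE B1"
  shows "\<exists>E \<subseteq> gE B. fc_step X rt (remove_edges B E) (remove_edges B1 E')"
  using assms(2)
proof (cases rule: fc_stepE)
  case (delete v)
  then have "fc_step X rt (remove_edges B E') (remove_edges B1 E')"
    using fc_step_del_vertex_remove_edges[OF assms(1)] by blast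
  moreover have "E' \<subseteq> gE B" using delete assms(3) by auto
  ultimately show ?thesis by blast
next
  case (suppress v u w)
  then show ?thesis using fc_step_suppress_remove_edges_back[OF assms(1)] assms(3) by simp
qed

lemma fc_steps_remove_edges_back:
  assumes "fc_steps X rt B B'" "wf_xgraph X B" "E' \<subseteq> gE B'"
  shows "\<exists>E \<subseteq> gE B. fc_steps X rt (remove_edges B E) (remove_edges B' E')"
  using assms(1,3)
proof (induction arbitrary: E' rule: rtranclp_induct)
  case (step y z)
  have "wf_xgraph X y" using wf_fc_steps step(1) assms(2) by blast
  then obtain E1 where "E1 \<subseteq> gE y" "fc_step X rt (remove_edges y E1) (remove_edges z E')"
    using fc_step_remove_edges_back[OF _ step(2,4)] by blast
  then show ?case using step(3) by (meson rtranclp.rtrancl_into_rtrancl)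
qed blast

section \<open>Subforests\<close>

lemma remove_edges_twice: "remove_edges (remove_edges C E1) E2 = remove_edges C (E1 \<union> E2)"
  by (rule xgraph_eqI) auto

lemma subforest_refl:
  assumes "wf_xgraph X A"
  shows "subforest X rt A A"
proof -
  obtain R where "fc_steps X rt A R" "fc_reduced X rt R" using fc_normal_form_exists[OF assms] by blast
  then have "fc_iso X rt A (remove_edges A {})" unfolding fc_iso_def using xiso_refl by fastforce
  then show ?thesis unfolding subforest_def by blast
qed

lemma subforest_trans:
  assumes wf_B: "wf_xgraph X B" and wf_C: "wf_xgraph X C"
    and AB: "subforest X rt A B" and BC: "subforest X rt B C"
  shows "subforest X rt A C"
proof -
  obtain E0 A' P where E0: "E0 \<subseteq> gE B" "fc_steps X rt A A'" "fc_reduced X rt A'"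
    "fc_steps X rt (remove_edges B E0) P" "fc_reduced X rt P" "xiso X rt A' P"
    using AB unfolding subforest_def fc_iso_def by blast
  obtain E1 B' Q where E1: "E1 \<subseteq> gE C" "fc_steps X rt B B'" "fc_reduced X rt B'"
    "fc_steps X rt (remove_edges C E1) Q" "fc_reduced X rt Q" "xiso X rt B' Q"
    using BC unfolding subforest_def fc_iso_def by blast
  have wf_B': "wf_xgraph X B'" using wf_fc_steps E1(2) wf_B by blast
  have wf_Q: "wf_xgraph X Q" using wf_fc_steps E1(4) wf_remove_edges[OF wf_C] by blast
  \<comment> \<open>transport the deletion of E0 along B \<rightarrow> B', then along the isomorphism B' \<cong> Q\<close>
  obtain E0' where E0': "E0' \<subseteq> gE B'" "fc_steps X rt (remove_edges B E0) (remove_edges B' E0')"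
    using fc_steps_remove_edges[OF E1(2) wf_B E0(1)] by blast
  obtain N where N: "fc_steps X rt (remove_edges B' E0') N" "fc_reduced X rt N"
    using fc_normal_form_exists[OF wf_remove_edges[OF wf_B']] by blast
  have "xiso X rt P N"
    using fc_normal_forms_xiso[OF wf_remove_edges[OF wf_B] E0(4,5)] E0'(2) N by (meson rtranclp_trans)
  obtain f where "xiso_map X rt f B' Q" using E1(6) xiso_iff_xiso_map by blast
  then obtain E0'' where E0'': "E0'' \<subseteq> gE Q"
    "xiso_map X rt f (remove_edges B' E0') (remove_edges Q E0'')"
    using xiso_map_remove_edges[OF wf_B' wf_Q _ E0'(1)] by blast
  obtain N' where N': "fc_steps X rt (remove_edges Q E0'') N'" "fc_reduced X rt N'" "xiso X rt N N'"
    using xiso_fc_normal_form[OF N wf_remove_edges[OF wf_B'] wf_remove_edges[OF wf_Q]] E0''(2)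
      xiso_iff_xiso_map by blast
  \<comment> \<open>pull the deletion of E0'' back along C - E1 \<rightarrow> Q\<close>
  obtain E2 where E2: "E2 \<subseteq> gE (remove_edges C E1)"
    "fc_steps X rt (remove_edges (remove_edges C E1) E2) (remove_edges Q E0'')"
    using fc_steps_remove_edges_back[OF E1(4) wf_remove_edges[OF wf_C] E0''(1)] by blast
  have "fc_steps X rt (remove_edges C (E1 \<union> E2)) N'"
    using E2(2) N'(1) unfolding remove_edges_twice by (meson rtranclp_trans)
  moreover have "xiso X rt A' N'" using E0(6) \<open>xiso X rt P N\<close> N'(3) xiso_trans by blast
  moreover have "E1 \<union> E2 \<subseteq> gE C" using E1(1) E2(1) by auto
  ultimately show ?thesis unfolding subforest_def fc_iso_def using E0(2,3) N'(2) by blast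
qed

lemma agreement_forest_wf: "agreement_forest X rt Fs G \<Longrightarrow> wf_xgraph X G"
  unfolding agreement_forest_def using xforest_wf by blast

lemma agreement_forest_subforest:
  assumes F: "agreement_forest X rt Fs F" and wf: "\<forall>H \<in> Fs. wf_xgraph X H"
    and G: "is_xforest X rt G" "subforest X rt G F"
  shows "agreement_forest X rt Fs G"
  unfolding agreement_forest_def
proof (intro conjI ballI)
  fix H assume "H \<in> Fs"
  then show "subforest X rt G H"
    using subforest_trans[OF agreement_forest_wf[OF F] _ G(2)] F wf
    unfolding agreement_forest_def by blast
qed (rule G(1))

lemma ex_maximal_agreement_forest_above:
  assumes "agreement_forest X rt {F1, F2} F" "wf_xgraph X F1" "wf_xgraph X F2"
  shows "\<exists>F'. maximal_agreement_forest X rt F1 F2 F' \<and> subforest X rt F F'"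
proof -
  let ?above = "\<lambda>G. agreement_forest X rt {F1, F2} G \<and> subforest X rt F G"
  have "?above F" using assms(1) subforest_refl[OF agreement_forest_wf[OF assms(1)]] by simp
  then obtain F' where F': "?above F'" and least: "\<And>G. ?above G \<Longrightarrow> Ord F' \<le> Ord G"
    using ex_has_least_nat[of ?above F Ord] by blast
  have "\<not> Ord G < Ord F'"
    if "agreement_forest X rt {F1, F2} G" "subforest X rt F' G" for G
  proof -
    have "subforest X rt F G"
      using subforest_trans[OF agreement_forest_wf[OF conjunct1[OF F']]
          agreement_forest_wf[OF that(1)]] F' that(2) by blast
    then show ?thesis using least that(1) by (simp add: not_less)
  qed
  then have "maximal_agreement_forest X rt F1 F2 F'"
    using F' unfolding maximal_agreement_forest_def by auto
  then show ?thesis using F' by blast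
qed

theorem lemma4p2:
  fixes X :: "'x set" and rt :: "'x option"
    and Fs :: "('v, 'x) xgraph list" and F :: "('v, 'x) xgraph"
  assumes "finite X"
    and "2 \<le> length Fs"
    and "\<forall>G \<in> set Fs. is_xforest X rt G"
    and "maximum_agreement_forest X rt (set Fs) F"
  shows "\<exists>F'. maximal_agreement_forest X rt (Fs ! 0) (Fs ! 1) F' \<and>
              maximum_agreement_forest X rt (set (F' # drop 2 Fs)) F"
proof -
  obtain F1 F2 rest where Fs: "Fs = F1 # F2 # rest"
    using assms(2) by (cases Fs; cases "tl Fs") auto
  have wf: "wf_xgraph X F1" "wf_xgraph X F2" using assms(3) xforest_wf unfolding Fs by auto
  have F: "agreement_forest X rt (set Fs) F"
    "\<And>G. agreement_forest X rt (set Fs) G \<Longrightarrow> Ord F \<le> Ord G"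
    using assms(4) unfolding maximum_agreement_forest_def by auto
  have agree: "agreement_forest X rt (set Fs) G \<longleftrightarrow>
      agreement_forest X rt {F1, F2} G \<and> (\<forall>H \<in> set rest. subforest X rt G H)" for G
    unfolding agreement_forest_def Fs by auto
  obtain F' where F': "maximal_agreement_forest X rt F1 F2 F'" "subforest X rt F F'"
    using ex_maximal_agreement_forest_above[OF _ wf] F(1) agree by blast
  have "agreement_forest X rt (set (F' # rest)) F"
    using F(1) F'(2) agree unfolding agreement_forest_def by auto
  moreover have "Ord F \<le> Ord G" if G: "agreement_forest X rt (set (F' # rest)) G" for G
  proof -
    have "agreement_forest X rt {F1, F2} G"
      using agreement_forest_subforest[of X rt "{F1, F2}" F' G] F'(1) wf G
      unfolding maximal_agreement_forest_def agreement_forest_def by auto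
    then show ?thesis using F(2) G agree unfolding agreement_forest_def by auto
  qed
  ultimately show ?thesis using F'(1) unfolding maximum_agreement_forest_def Fs by auto
qed

end
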